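(* Let $q$ be a prime power and $f\in\mathbb{F}_q[x]$ monic of degree $m$, and put $M(x)=x^mf(x+x^{-1})$. Suppose $M(x)=(x-1)^2g_1(x)\cdots g_{r-1}(x)$ where the $g_i$ are pairwise different monic irreducible polynomials, none equal to $x\pm1$. Let $M_t(x)=M(x)+tx^m\in\mathbb{F}_q(t)[x]$ with Galois group $H$ over $\mathbb{F}_q(t)$, let its roots be arranged in pairs $\{\alpha_i,\alpha_i^{-1}\}$, $1\le i\le m$, and let $N$ be the kernel of the action of $H$ on these pairs. Then $H/N$ (and hence any subgroup $H_0\le H$ with $H_0\cong H/N$, $H_0\cap N=1$) is isomorphic to the Galois group of $f(x)+t$ over $\mathbb{F}_q(t)$. *)

theory Defs
  imports "HOL-Algebra.Algebraic_Closure_Type" "HOL-Computational_Algebra.Fraction_Field"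
    "HOL-Algebra.Coset"
begin

definition root_set :: "'k::field poly \<Rightarrow> 'k alg_closure set" where
  "root_set p = {x. poly (map_poly to_ac p) x = 0}"

definition base_auts :: "('k::field alg_closure \<Rightarrow> 'k alg_closure) set" where
  "base_auts = {\<sigma>. bij \<sigma> \<and> (\<forall>x y. \<sigma> (x + y) = \<sigma> x + \<sigma> y \<and> \<sigma> (x * y) = \<sigma> x * \<sigma> y)
                    \<and> (\<forall>c. \<sigma> (to_ac c) = to_ac c)}"

text \<open>Galois group of p over the base field, as permutations of the roots of p
  (identity outside the root set), i.e. the restrictions of automorphisms to the roots.\<close>
definition gal_perms :: "'k::field poly \<Rightarrow> ('k alg_closure \<Rightarrow> 'k alg_closure) set" where
  "gal_perms p = (\<lambda>\<sigma> x. if x \<in> root_set p then \<sigma> x else x) ` base_auts"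

definition gal_group :: "'k::field poly \<Rightarrow> ('k alg_closure \<Rightarrow> 'k alg_closure) monoid" where
  "gal_group p = \<lparr>carrier = gal_perms p, monoid.mult = (\<circ>), one = id\<rparr>"

definition root_pairs :: "'k::field poly \<Rightarrow> 'k alg_closure set set" where
  "root_pairs p = {{a, inverse a} | a. a \<in> root_set p}"

definition pair_kernel :: "'k::field poly \<Rightarrow> ('k alg_closure \<Rightarrow> 'k alg_closure) set" where
  "pair_kernel p = {\<sigma> \<in> gal_perms p. \<forall>P \<in> root_pairs p. \<sigma> ` P = P}"

text \<open>M(x) = x^m f(x + 1/x), m = deg f, written out as a polynomial.\<close>
definition recip_M :: "'a::field poly \<Rightarrow> 'a poly" where
  "recip_M f = (\<Sum>i\<le>degree f. smult (coeff f i) ([:1, 0, 1:] ^ i * monom 1 (degree f - i)))"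

text \<open>Embedding F_q[x] into F_q(t)[x] (coefficients as constants) and t itself.\<close>
definition const_poly :: "'a::field poly \<Rightarrow> 'a poly fract poly" where
  "const_poly p = map_poly (\<lambda>c. to_fract [:c:]) p"

definition tvar :: "'a::field poly fract" where
  "tvar = to_fract [:0, 1:]"

end

theory Submission
  imports Defs
begin

text \<open>For \<open>a \<noteq> 0\<close> one has \<open>M\<^sub>t(a) = a\<^sup>m (f(a + 1/a) + t)\<close>, and \<open>0\<close> is never a root of \<open>M\<^sub>t\<close>;
  hence the roots of \<open>f + t\<close> are exactly the values \<open>a + 1/a\<close> at the roots \<open>a\<close> of \<open>M\<^sub>t\<close>.
  Restricting automorphisms of the algebraic closure from the roots of \<open>M\<^sub>t\<close> to those of
  \<open>f + t\<close> is therefore a well-defined surjective homomorphism \<open>H \<rightarrow> Gal(f + t)\<close>. Since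
  \<open>b + 1/b = a + 1/a\<close> iff \<open>{b, 1/b} = {a, 1/a}\<close>, an automorphism fixes all roots of \<open>f + t\<close>
  iff it stabilises every pair \<open>{a, 1/a}\<close>, so the kernel is \<open>N\<close>.\<close>

locale comm_ring_hom =
  fixes h :: "'a::comm_ring_1 \<Rightarrow> 'b::comm_ring_1"
  assumes hom_add: "h (x + y) = h x + h y"
    and hom_mult: "h (x * y) = h x * h y"
    and hom_one: "h 1 = 1"
begin

lemma hom_zero [simp]: "h 0 = 0"
  using hom_add[of 0 0] by simp

lemma hom_sum: "h (sum g A) = (\<Sum>i\<in>A. h (g i))"
  by (induction A rule: infinite_finite_induct) (simp_all add: hom_add)

lemma hom_power: "h (x ^ n) = h x ^ n"
  by (induction n) (simp_all add: hom_one hom_mult)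

lemma map_poly_add: "map_poly h (p + q) = map_poly h p + map_poly h q"
  by (rule poly_eqI) (simp add: coeff_map_poly hom_add)

lemma map_poly_mult: "map_poly h (p * q) = map_poly h p * map_poly h q"
  by (rule poly_eqI) (simp add: coeff_map_poly coeff_mult hom_sum hom_mult)

lemma poly_map_poly: "h (poly p x) = poly (map_poly h p) (h x)"
  by (induction p) (simp_all add: map_poly_pCons hom_add hom_mult)

lemma comm_ring_hom_poly_map_poly: "comm_ring_hom (\<lambda>p. poly (map_poly h p) y)"
  by unfold_locales (simp_all add: map_poly_add map_poly_mult hom_one)

end

locale field_hom = comm_ring_hom h for h :: "'a::field \<Rightarrow> 'b::field"
begin

lemma hom_inverse: "h (inverse x) = inverse (h x)"
proof (cases "x = 0")
  case False
  then have "h x * h (inverse x) = 1"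
    by (simp flip: hom_mult add: hom_one)
  then show ?thesis by (metis inverse_unique)
qed simp

lemma hom_eq_0_iff [simp]: "h x = 0 \<longleftrightarrow> x = 0"
  by (metis hom_mult hom_one hom_zero right_inverse zero_neq_one mult_zero_left)

lemma degree_map_poly_hom [simp]: "degree (map_poly h p) = degree p"
  by (rule degree_map_poly) simp

lemma poly_map_poly_eq_sum: "poly (map_poly h p) x = (\<Sum>i\<le>degree p. h (coeff p i) * x ^ i)"
  by (simp add: poly_altdef coeff_map_poly)

end

lemma (in field_hom) poly_map_poly_recip_M:
  assumes "a \<noteq> 0"
  shows "poly (map_poly h (recip_M f)) a = a ^ degree f * poly (map_poly h f) (a + inverse a)"
proof -
  interpret eval: comm_ring_hom "\<lambda>p. poly (map_poly h p) a"
    by (rule comm_ring_hom_poly_map_poly)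
  have reciprocal: "(1 + a\<^sup>2) ^ i * a ^ (degree f - i) = a ^ degree f * (a + inverse a) ^ i"
    if "i \<le> degree f" for i
  proof -
    have "1 + a\<^sup>2 = a * (a + inverse a)"
      using assms by (simp add: distrib_left power2_eq_square)
    then show ?thesis
      using that by (simp add: power_mult_distrib mult_ac flip: power_add)
  qed
  have "poly (map_poly h (recip_M f)) a
      = (\<Sum>i\<le>degree f. h (coeff f i) * ((1 + a\<^sup>2) ^ i * a ^ (degree f - i)))"
    unfolding recip_M_def
    by (simp add: eval.hom_sum eval.hom_mult eval.hom_power map_poly_smult hom_mult
        map_poly_pCons map_poly_monom hom_one poly_monom power2_eq_square)
  also have "\<dots> = (\<Sum>i\<le>degree f. a ^ degree f * (h (coeff f i) * (a + inverse a) ^ i))"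
    by (intro sum.cong refl) (simp add: reciprocal mult.left_commute)
  finally show ?thesis
    by (simp add: poly_map_poly_eq_sum sum_distrib_left)
qed

lemma coeff_0_recip_M: "coeff (recip_M f) 0 = lead_coeff f"
  by (simp add: recip_M_def coeff_sum coeff_mult_0 coeff_0_power)
    (simp add: if_distrib[of "times _"] cong: if_cong)

lemma ex_add_inverse_eq:
  fixes x :: "'a::alg_closed_field"
  shows "\<exists>a. a \<noteq> 0 \<and> a + inverse a = x"
proof -
  obtain a where root: "poly [:1, -x, 1:] a = 0"
    using alg_closed_imp_poly_has_root[of "[:1, -x, 1:]"] by auto
  then have "a \<noteq> 0" by auto
  moreover have "a * (a + inverse a) = a * x"
    using root \<open>a \<noteq> 0\<close> by (simp add: algebra_simps)
  ultimately show ?thesis by auto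
qed

lemma doubleton_inverse_eq_iff:
  fixes a b :: "'a::field"
  assumes "a \<noteq> 0" "b \<noteq> 0"
  shows "{b, inverse b} = {a, inverse a} \<longleftrightarrow> b + inverse b = a + inverse a"
proof
  assume "b + inverse b = a + inverse a"
  then have "(b - a) * (1 - inverse (a * b)) = 0"
    using assms by (simp add: field_simps)
  then have "b = a \<or> a * b = 1"
    by (metis eq_iff_diff_eq_0 inverse_1 inverse_inverse_eq mult_eq_0_iff)
  then have "b = a \<or> b = inverse a"
    using inverse_unique by metis
  then show "{b, inverse b} = {a, inverse a}" by auto
qed (auto simp: doubleton_eq_iff add.commute)

lemma zero_in_root_set_iff: "0 \<in> root_set p \<longleftrightarrow> coeff p 0 = 0"
  by (simp add: root_set_def poly_0_coeff_0 coeff_map_poly)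

lemma base_auts_fixes_to_ac: "\<sigma> \<in> base_auts \<Longrightarrow> \<sigma> (to_ac c) = to_ac c"
  by (simp add: base_auts_def)

lemma field_hom_base_auts: "\<sigma> \<in> base_auts \<Longrightarrow> field_hom \<sigma>"
  using base_auts_fixes_to_ac[of \<sigma> 1] by unfold_locales (simp_all add: base_auts_def)

lemma base_auts_root_set:
  assumes "\<sigma> \<in> base_auts" "x \<in> root_set p"
  shows "\<sigma> x \<in> root_set p"
proof -
  interpret field_hom \<sigma> by (rule field_hom_base_auts[OF assms(1)])
  have "poly (map_poly to_ac p) (\<sigma> x) = \<sigma> (poly (map_poly to_ac p) x)"
    by (simp add: poly_map_poly map_poly_map_poly o_def base_auts_fixes_to_ac[OF assms(1)])
  then show ?thesis
    using assms(2) by (simp add: root_set_def)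
qed

lemma id_in_base_auts: "id \<in> base_auts"
  by (simp add: base_auts_def)

lemma comp_in_base_auts: "\<sigma> \<in> base_auts \<Longrightarrow> \<tau> \<in> base_auts \<Longrightarrow> \<sigma> \<circ> \<tau> \<in> base_auts"
  by (auto simp: base_auts_def intro: bij_comp)

lemma inv_in_base_auts:
  assumes "\<sigma> \<in> base_auts"
  shows "inv_into UNIV \<sigma> \<in> base_auts"
proof -
  interpret field_hom \<sigma> by (rule field_hom_base_auts[OF assms])
  have bij: "bij \<sigma>"
    using assms by (simp add: base_auts_def)
  have inv: "\<sigma> (inv_into UNIV \<sigma> x) = x" "inv_into UNIV \<sigma> (\<sigma> x) = x" for x
    using bij by (simp_all add: bij_is_surj surj_f_inv_f bij_is_inj)
  have "inv_into UNIV \<sigma> (x + y) = inv_into UNIV \<sigma> x + inv_into UNIV \<sigma> y" for x y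
    by (metis inv hom_add)
  moreover have "inv_into UNIV \<sigma> (x * y) = inv_into UNIV \<sigma> x * inv_into UNIV \<sigma> y" for x y
    by (metis inv hom_mult)
  moreover have "inv_into UNIV \<sigma> (to_ac c) = to_ac c" for c
    by (metis inv(2) base_auts_fixes_to_ac[OF assms])
  ultimately show ?thesis
    using bij_imp_bij_inv[OF bij] by (simp add: base_auts_def)
qed

definition restrict_roots :: "'k::field poly \<Rightarrow> ('k alg_closure \<Rightarrow> 'k alg_closure)
    \<Rightarrow> 'k alg_closure \<Rightarrow> 'k alg_closure" where
  "restrict_roots p \<sigma> x = (if x \<in> root_set p then \<sigma> x else x)"

lemma gal_perms_eq: "gal_perms p = restrict_roots p ` base_auts"
  by (simp add: gal_perms_def restrict_roots_def[abs_def])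

lemma restrict_roots_comp:
  "\<tau> \<in> base_auts \<Longrightarrow> restrict_roots p \<sigma> \<circ> restrict_roots p \<tau> = restrict_roots p (\<sigma> \<circ> \<tau>)"
  by (auto simp: restrict_roots_def base_auts_root_set)

lemma restrict_roots_id: "restrict_roots p id = id"
  by (auto simp: restrict_roots_def)

lemma group_gal_group: "group (gal_group p)"
proof (rule groupI)
  show "\<one>\<^bsub>gal_group p\<^esub> \<in> carrier (gal_group p)"
    using image_eqI[where f = "restrict_roots p", OF restrict_roots_id[symmetric] id_in_base_auts]
    by (simp add: gal_group_def gal_perms_eq)
next
  fix \<pi> assume "\<pi> \<in> carrier (gal_group p)"
  then obtain \<sigma> where \<sigma>: "\<sigma> \<in> base_auts" "\<pi> = restrict_roots p \<sigma>"
    by (auto simp: gal_group_def gal_perms_eq)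
  have "inv_into UNIV \<sigma> \<circ> \<sigma> = id"
    using \<sigma>(1) by (simp add: base_auts_def bij_is_inj)
  then have "restrict_roots p (inv_into UNIV \<sigma>) \<circ> \<pi> = id"
    using \<sigma> by (simp add: restrict_roots_comp restrict_roots_id)
  then show "\<exists>\<rho>\<in>carrier (gal_group p). \<rho> \<otimes>\<^bsub>gal_group p\<^esub> \<pi> = \<one>\<^bsub>gal_group p\<^esub>"
    using inv_in_base_auts[OF \<sigma>(1)] by (auto simp: gal_group_def gal_perms_eq)
qed (auto simp: gal_group_def gal_perms_eq restrict_roots_comp comp_in_base_auts o_assoc)

locale gal_restriction =
  fixes p q :: "'k::field poly"
  assumes restrict_roots_determined:
    "\<lbrakk>\<sigma> \<in> base_auts; \<tau> \<in> base_auts; restrict_roots p \<sigma> = restrict_roots p \<tau>\<rbrakk>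
      \<Longrightarrow> restrict_roots q \<sigma> = restrict_roots q \<tau>"
begin

definition gal_restrict :: "('k alg_closure \<Rightarrow> 'k alg_closure) \<Rightarrow> 'k alg_closure \<Rightarrow> 'k alg_closure"
  where "gal_restrict \<pi> = restrict_roots q (SOME \<sigma>. \<sigma> \<in> base_auts \<and> \<pi> = restrict_roots p \<sigma>)"

lemma gal_restrict_restrict_roots:
  assumes "\<sigma> \<in> base_auts"
  shows "gal_restrict (restrict_roots p \<sigma>) = restrict_roots q \<sigma>"
proof -
  define \<tau> where "\<tau> = (SOME \<tau>. \<tau> \<in> base_auts \<and> restrict_roots p \<sigma> = restrict_roots p \<tau>)"
  have "\<tau> \<in> base_auts \<and> restrict_roots p \<sigma> = restrict_roots p \<tau>"
    unfolding \<tau>_def by (rule someI[of _ \<sigma>]) (simp add: assms)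
  then have "restrict_roots q \<sigma> = restrict_roots q \<tau>"
    using restrict_roots_determined[OF assms] by blast
  then show ?thesis
    unfolding gal_restrict_def \<tau>_def[symmetric] by simp
qed

lemma gal_restrict_hom: "gal_restrict \<in> hom (gal_group p) (gal_group q)"
proof (rule homI)
  fix \<pi> assume "\<pi> \<in> carrier (gal_group p)"
  then show "gal_restrict \<pi> \<in> carrier (gal_group q)"
    by (auto simp: gal_group_def gal_perms_eq gal_restrict_restrict_roots)
next
  fix \<pi> \<pi>' assume "\<pi> \<in> carrier (gal_group p)" "\<pi>' \<in> carrier (gal_group p)"
  then obtain \<sigma> \<tau> where "\<sigma> \<in> base_auts" "\<tau> \<in> base_auts"
    and "\<pi> = restrict_roots p \<sigma>" "\<pi>' = restrict_roots p \<tau>"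
    by (auto simp: gal_group_def gal_perms_eq)
  then show "gal_restrict (\<pi> \<otimes>\<^bsub>gal_group p\<^esub> \<pi>') = gal_restrict \<pi> \<otimes>\<^bsub>gal_group q\<^esub> gal_restrict \<pi>'"
    by (simp add: gal_group_def restrict_roots_comp gal_restrict_restrict_roots comp_in_base_auts)
qed

lemma gal_restrict_onto: "gal_restrict ` carrier (gal_group p) = carrier (gal_group q)"
  by (simp add: gal_group_def gal_perms_eq image_image gal_restrict_restrict_roots)

lemma kernel_gal_restrict:
  "kernel (gal_group p) (gal_group q) gal_restrict
    = restrict_roots p ` {\<sigma> \<in> base_auts. \<forall>x \<in> root_set q. \<sigma> x = x}"
proof -
  have "restrict_roots q \<sigma> = id \<longleftrightarrow> (\<forall>x \<in> root_set q. \<sigma> x = x)" for \<sigma>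
    by (auto simp: restrict_roots_def fun_eq_iff)
  then show ?thesis
    by (auto simp: kernel_def gal_group_def gal_perms_eq gal_restrict_restrict_roots)
qed

lemma gal_group_Mod_iso:
  "gal_group p Mod restrict_roots p ` {\<sigma> \<in> base_auts. \<forall>x \<in> root_set q. \<sigma> x = x} \<cong> gal_group q"
proof -
  interpret group_hom "gal_group p" "gal_group q" gal_restrict
    by (simp add: group_hom_def group_hom_axioms_def group_gal_group gal_restrict_hom)
  show ?thesis
    using FactGroup_iso[OF gal_restrict_onto] by (simp add: kernel_gal_restrict)
qed

end

interpretation to_ac: field_hom to_ac
  by unfold_locales simp_all

interpretation const_to_ac: field_hom "\<lambda>c. to_ac (to_fract [:c:])"
  by unfold_locales (simp_all add: pCons_one flip: to_ac_add to_ac_mult to_fract_add to_fract_mult)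

abbreviation recip_Mt :: "'a::field poly \<Rightarrow> 'a poly fract poly" where
  "recip_Mt f \<equiv> const_poly (recip_M f) + monom tvar (degree f)"

abbreviation f_plus_t :: "'a::field poly \<Rightarrow> 'a poly fract poly" where
  "f_plus_t f \<equiv> const_poly f + [:tvar:]"

lemma map_poly_to_ac_const_poly:
  "map_poly to_ac (const_poly p) = map_poly (\<lambda>c. to_ac (to_fract [:c:])) p"
  by (simp add: const_poly_def map_poly_map_poly o_def)

lemma poly_recip_Mt:
  assumes "a \<noteq> 0"
  shows "poly (map_poly to_ac (recip_Mt f)) a
    = a ^ degree f * poly (map_poly to_ac (f_plus_t f)) (a + inverse a)"
  using const_to_ac.poly_map_poly_recip_M[OF assms, of f]
  by (simp add: to_ac.map_poly_add map_poly_to_ac_const_poly map_poly_monom poly_monom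
      map_poly_pCons distrib_left mult.commute)

lemma coeff_0_recip_Mt_nonzero: "coeff (recip_Mt f) 0 \<noteq> 0"
proof (cases "degree f = 0")
  case True
  then have "coeff (recip_Mt f) 0 = to_fract [:lead_coeff f, 1:]"
    by (simp add: const_poly_def coeff_map_poly coeff_0_recip_M tvar_def flip: to_fract_add)
  then show ?thesis by simp
next
  case False
  then have "coeff (recip_Mt f) 0 = to_fract [:lead_coeff f:]" and "f \<noteq> 0"
    by (auto simp: const_poly_def coeff_map_poly coeff_0_recip_M)
  then show ?thesis by simp
qed

lemma root_set_recip_Mt_iff:
  "a \<in> root_set (recip_Mt f) \<longleftrightarrow> a \<noteq> 0 \<and> a + inverse a \<in> root_set (f_plus_t f)"
proof (cases "a = 0")
  case True
  then show ?thesis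
    using zero_in_root_set_iff coeff_0_recip_Mt_nonzero by blast
next
  case False
  then show ?thesis
    by (simp add: root_set_def poly_recip_Mt)
qed

lemma inverse_in_root_set_recip_Mt:
  "a \<in> root_set (recip_Mt f) \<Longrightarrow> inverse a \<in> root_set (recip_Mt f)"
  by (simp add: root_set_recip_Mt_iff add.commute)

lemma root_set_f_plus_t: "root_set (f_plus_t f) = (\<lambda>a. a + inverse a) ` root_set (recip_Mt f)"
proof
  show "root_set (f_plus_t f) \<subseteq> (\<lambda>a. a + inverse a) ` root_set (recip_Mt f)"
  proof
    fix x assume "x \<in> root_set (f_plus_t f)"
    moreover obtain a where "a \<noteq> 0" "a + inverse a = x"
      using ex_add_inverse_eq by blast
    ultimately show "x \<in> (\<lambda>a. a + inverse a) ` root_set (recip_Mt f)"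
      by (auto simp: root_set_recip_Mt_iff)
  qed
qed (auto simp: root_set_recip_Mt_iff)

lemma gal_restriction_recip_Mt: "gal_restriction (recip_Mt f) (f_plus_t f)"
proof
  fix \<sigma> \<tau> :: "'a poly fract alg_closure \<Rightarrow> 'a poly fract alg_closure"
  assume \<sigma>: "\<sigma> \<in> base_auts" and \<tau>: "\<tau> \<in> base_auts"
    and eq: "restrict_roots (recip_Mt f) \<sigma> = restrict_roots (recip_Mt f) \<tau>"
  interpret \<sigma>: field_hom \<sigma> by (rule field_hom_base_auts[OF \<sigma>])
  interpret \<tau>: field_hom \<tau> by (rule field_hom_base_auts[OF \<tau>])
  have "\<sigma> a = \<tau> a" if "a \<in> root_set (recip_Mt f)" for a
    using fun_cong[OF eq, of a] that by (simp add: restrict_roots_def)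
  then have "\<sigma> x = \<tau> x" if "x \<in> root_set (f_plus_t f)" for x
    using that by (auto simp: root_set_f_plus_t \<sigma>.hom_add \<tau>.hom_add \<sigma>.hom_inverse \<tau>.hom_inverse)
  then show "restrict_roots (f_plus_t f) \<sigma> = restrict_roots (f_plus_t f) \<tau>"
    by (simp add: restrict_roots_def fun_eq_iff)
qed

lemma preserves_root_pairs_iff:
  assumes "\<sigma> \<in> base_auts"
  shows "(\<forall>P \<in> root_pairs (recip_Mt f). restrict_roots (recip_Mt f) \<sigma> ` P = P)
    \<longleftrightarrow> (\<forall>x \<in> root_set (f_plus_t f). \<sigma> x = x)"
proof -
  interpret field_hom \<sigma> by (rule field_hom_base_auts[OF assms])
  have "restrict_roots (recip_Mt f) \<sigma> ` {a, inverse a} = {a, inverse a}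
      \<longleftrightarrow> \<sigma> (a + inverse a) = a + inverse a" if a: "a \<in> root_set (recip_Mt f)" for a
  proof -
    have "a \<noteq> 0" "\<sigma> a \<noteq> 0"
      using a base_auts_root_set[OF assms a] by (simp_all add: root_set_recip_Mt_iff)
    then show ?thesis
      using a inverse_in_root_set_recip_Mt[OF a]
      by (simp add: restrict_roots_def hom_add hom_inverse doubleton_inverse_eq_iff)
  qed
  then show ?thesis
    by (auto simp: root_pairs_def root_set_f_plus_t)
qed

lemma pair_kernel_recip_Mt:
  "pair_kernel (recip_Mt f)
    = restrict_roots (recip_Mt f) ` {\<sigma> \<in> base_auts. \<forall>x \<in> root_set (f_plus_t f). \<sigma> x = x}"
proof -
  have "pair_kernel (recip_Mt f) = restrict_roots (recip_Mt f) `
      {\<sigma> \<in> base_auts. \<forall>P \<in> root_pairs (recip_Mt f). restrict_roots (recip_Mt f) \<sigma> ` P = P}"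
    by (auto simp: pair_kernel_def gal_perms_eq)
  then show ?thesis
    by (simp add: preserves_root_pairs_iff cong: conj_cong)
qed

theorem lemma5p4:
  fixes f :: "'a::{field,finite} poly"
    and G :: "'a poly set"
  assumes "lead_coeff f = 1"
    and "finite G"
    and "recip_M f = [:-1, 1:] ^ 2 * (\<Prod>g\<in>G. g)"
    and "\<forall>g\<in>G. lead_coeff g = 1 \<and> irreducible g \<and> g \<noteq> [:-1, 1:] \<and> g \<noteq> [:1, 1:]"
  defines "H \<equiv> gal_group (const_poly (recip_M f) + monom tvar (degree f))"
    and "N \<equiv> pair_kernel (const_poly (recip_M f) + monom tvar (degree f))"
  shows "H Mod N \<cong> gal_group (const_poly f + [:tvar:])
     \<and> (\<forall>H0. subgroup H0 H \<longrightarrow> H0 \<inter> N = {id} \<longrightarrow> H\<lparr>carrier := H0\<rparr> \<cong> H Mod N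
            \<longrightarrow> H\<lparr>carrier := H0\<rparr> \<cong> gal_group (const_poly f + [:tvar:]))"
proof -
  interpret gal_restriction "recip_Mt f" "f_plus_t f"
    by (rule gal_restriction_recip_Mt)
  have "H Mod N \<cong> gal_group (f_plus_t f)"
    unfolding H_def N_def pair_kernel_recip_Mt by (rule gal_group_Mod_iso)
  then show ?thesis
    using iso_trans by blast
qed

end
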